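(* Let $G=G(n_1,n_2,p)$ where $1\ll n_1=\lambda n_2$ for a constant $0<\lambda\leq1$, and $p=\frac{d}{\sqrt{n_1n_2}}$ for a constant $d>1$. Then whp there are no small balanced complex components in $G$.
   Context: $G(n_1,n_2,p)$ is the binomial random bipartite graph with partition classes $N_1,N_2$ of sizes $n_1,n_2$, each edge between them present independently with probability $p$. For $p=\frac{d}{\sqrt{n_1n_2}}$ with $d>1$, there exist positive constants $\beta_0,\beta_1$ (from a result of Johansson) such that whp at most one component of $G$ meets $N_1$ in more than $\beta_1\sqrt{n_1\log n_1}$ vertices and no component meets $N_1$ in $k$ vertices with $k\in[\beta_0\log^2 n_1,\beta_1\sqrt{n_1\log n_1}]$; fix such $\beta_0$. A component $C$ is small if $|C\cap N_1|\leq\beta_0\log^2 n_1$, balanced if $|C\cap N_2|\leq 2pn_2|C\cap N_1|$, and complex if it contains more than one cycle. "whp" means with probability tending to $1$ as $n_1\to\infty$. *)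

theory Defs
  imports "HOL-Probability.Probability"
begin

text \<open>Vertices of the bipartite graph: Inl i (i < n1) form N1, Inr j (j < n2) form N2.
  An edge set is a set of pairs (i,j), meaning the edge between Inl i and Inr j.\<close>

definition bip_adj :: "(nat \<times> nat) set \<Rightarrow> nat + nat \<Rightarrow> nat + nat \<Rightarrow> bool" where
  "bip_adj E u v \<longleftrightarrow>
     (\<exists>i j. (i, j) \<in> E \<and> ((u = Inl i \<and> v = Inr j) \<or> (u = Inr j \<and> v = Inl i)))"

definition Gbip :: "nat \<Rightarrow> nat \<Rightarrow> real \<Rightarrow> (nat \<times> nat) set pmf" where
  "Gbip n1 n2 p =
     map_pmf (\<lambda>f. {e. f e}) (Pi_pmf ({..<n1} \<times> {..<n2}) False (\<lambda>_. bernoulli_pmf p))"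

definition bip_vertices :: "nat \<Rightarrow> nat \<Rightarrow> (nat + nat) set" where
  "bip_vertices n1 n2 = Inl ` {..<n1} \<union> Inr ` {..<n2}"

definition bip_components :: "nat \<Rightarrow> nat \<Rightarrow> (nat \<times> nat) set \<Rightarrow> (nat + nat) set set" where
  "bip_components n1 n2 E = {{u. (bip_adj E)\<^sup>*\<^sup>* v u} | v. v \<in> bip_vertices n1 n2}"

definition part1 :: "(nat + nat) set \<Rightarrow> nat set" where
  "part1 C = {i. Inl i \<in> C}"

definition part2 :: "(nat + nat) set \<Rightarrow> nat set" where
  "part2 C = {j. Inr j \<in> C}"

definition edge_verts :: "(nat \<times> nat) set \<Rightarrow> (nat + nat) set" where
  "edge_verts F = Inl ` fst ` F \<union> Inr ` snd ` F"

definition is_cycle :: "(nat \<times> nat) set \<Rightarrow> bool" where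
  "is_cycle F \<longleftrightarrow> finite F \<and> F \<noteq> {} \<and>
     (\<forall>u \<in> edge_verts F. \<forall>v \<in> edge_verts F. (bip_adj F)\<^sup>*\<^sup>* u v) \<and>
     (\<forall>v \<in> edge_verts F. card {e \<in> F. v \<in> edge_verts {e}} = 2)"

definition is_complex :: "(nat \<times> nat) set \<Rightarrow> (nat + nat) set \<Rightarrow> bool" where
  "is_complex E C \<longleftrightarrow> (\<exists>F1 F2. F1 \<noteq> F2 \<and> is_cycle F1 \<and> is_cycle F2 \<and>
      F1 \<subseteq> E \<and> F2 \<subseteq> E \<and> edge_verts F1 \<subseteq> C \<and> edge_verts F2 \<subseteq> C)"

definition is_small :: "real \<Rightarrow> nat \<Rightarrow> (nat + nat) set \<Rightarrow> bool" where
  "is_small \<beta>0 n1 C \<longleftrightarrow> real (card (part1 C)) \<le> \<beta>0 * (ln (real n1))\<^sup>2"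

definition is_balanced :: "real \<Rightarrow> nat \<Rightarrow> (nat + nat) set \<Rightarrow> bool" where
  "is_balanced p n2 C \<longleftrightarrow> real (card (part2 C)) \<le> 2 * p * real n2 * real (card (part1 C))"

definition whp :: "(nat \<Rightarrow> 'a pmf) \<Rightarrow> (nat \<Rightarrow> 'a \<Rightarrow> bool) \<Rightarrow> bool" where
  "whp G Q \<longleftrightarrow> (\<lambda>k. measure_pmf.prob (G k) {x. Q k x}) \<longlonglongrightarrow> 1"

definition johansson_gap ::
  "real \<Rightarrow> (nat \<Rightarrow> nat) \<Rightarrow> (nat \<Rightarrow> nat) \<Rightarrow> (nat \<Rightarrow> real) \<Rightarrow> bool" where
  "johansson_gap \<beta>0 n1 n2 p \<longleftrightarrow> (\<exists>\<beta>1 > 0.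
     whp (\<lambda>k. Gbip (n1 k) (n2 k) (p k)) (\<lambda>k E.
       card {C \<in> bip_components (n1 k) (n2 k) E.
              real (card (part1 C)) > \<beta>1 * sqrt (real (n1 k) * ln (real (n1 k)))} \<le> 1 \<and>
       (\<forall>C \<in> bip_components (n1 k) (n2 k) E.
          \<not> (\<beta>0 * (ln (real (n1 k)))\<^sup>2 \<le> real (card (part1 C)) \<and>
             real (card (part1 C)) \<le> \<beta>1 * sqrt (real (n1 k) * ln (real (n1 k)))))))"

end

theory Submission
  imports Defs "HOL-Real_Asymp.Real_Asymp"
begin

text \<open>A complex component whose vertex classes \<open>S1 \<subseteq> N1\<close>, \<open>S2 \<subseteq> N2\<close> have sizes \<open>a\<close> and
  \<open>b\<close> contains a spanning tree and two further edges, and no edge leaves it. Describing the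
  tree by its root and its parent maps \<open>S1 \<rightarrow> S2\<close>, \<open>S2 \<rightarrow> S1\<close>, there are at most
  \<open>b^a a^b (a + b) (ab)\<^sup>2\<close> such witnesses, each present with probability
  \<open>p^(a+b+1) (1 - p)^(a(n2 - b) + b(n1 - a))\<close>. Summed over the choices of \<open>S1\<close> and \<open>S2\<close>,
  the expected number of complex components with parts of sizes \<open>a\<close>, \<open>b\<close> is at most
  \<open>(a + b) (ab)\<^sup>2 p e^(2pab)\<close>. Small balanced components have \<open>a \<le> \<beta>0 log\<^sup>2 n1\<close> and
  \<open>b \<le> 2pn2 a = O(a)\<close>, so each of the polylogarithmically many terms is \<open>polylog(n1)/n1\<close>.\<close>

section \<open>Probabilities of edge patterns\<close>

lemma set_pmf_Gbip_subset:
  assumes "E \<in> set_pmf (Gbip n1 n2 p)"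
  shows "E \<subseteq> {..<n1} \<times> {..<n2}"
  using assms set_Pi_pmf_subset[of "{..<n1} \<times> {..<n2}" False "\<lambda>_. bernoulli_pmf p"]
  unfolding Gbip_def by auto

lemma prob_Gbip_contains_avoids:
  fixes W B :: "(nat \<times> nat) set"
  assumes "W \<subseteq> {..<n1} \<times> {..<n2}" "B \<subseteq> {..<n1} \<times> {..<n2}" "W \<inter> B = {}"
    and "0 \<le> p" "p \<le> 1"
  shows "measure_pmf.prob (Gbip n1 n2 p) {E. W \<subseteq> E \<and> E \<inter> B = {}} = p ^ card W * (1 - p) ^ card B"
proof -
  define G where "G = {..<n1} \<times> {..<n2}"
  define allowed where
    "allowed e = (if e \<in> W then {True} else if e \<in> B then {False} else UNIV)" for e
  have fin: "finite G" "finite W" "finite B"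
    using finite_subset[OF assms(1)] finite_subset[OF assms(2)] by (auto simp: G_def)
  have "(\<lambda>f. {e. f e}) -` {E. W \<subseteq> E \<and> E \<inter> B = {}} = Pi G allowed"
    using assms(1-3) unfolding G_def allowed_def by (auto simp: Pi_def subset_iff; blast)
  then have "measure_pmf.prob (Gbip n1 n2 p) {E. W \<subseteq> E \<and> E \<inter> B = {}}
      = (\<Prod>e\<in>G. measure_pmf.prob (bernoulli_pmf p) (allowed e))"
    unfolding Gbip_def G_def[symmetric] measure_map_pmf by (simp add: measure_Pi_pmf_Pi fin)
  also have "\<dots> = (\<Prod>e\<in>G. if e \<in> W then p else if e \<in> B then 1 - p else 1)"
    using assms(4,5) by (intro prod.cong) (auto simp: allowed_def measure_pmf_single)
  also have "\<dots> = p ^ card W * (1 - p) ^ card B"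
  proof -
    have "G \<inter> {e. e \<in> W} = W" "G \<inter> - {e. e \<in> W} \<inter> {e. e \<in> B} = B"
      using assms(1-3) by (auto simp: G_def)
    then show ?thesis using fin by (simp add: prod.If_cases)
  qed
  finally show ?thesis .
qed

lemma edge_verts_singleton [simp]: "edge_verts {(i, j)} = {Inl i, Inr j}"
  by (auto simp: edge_verts_def)

lemma edge_verts_eq_UN: "edge_verts F = (\<Union>e\<in>F. edge_verts {e})"
  by (auto simp: edge_verts_def)

lemma edge_in_parts:
  assumes "e \<in> F" "edge_verts F \<subseteq> C"
  shows "e \<in> part1 C \<times> part2 C"
proof (cases e)
  case (Pair i j)
  then have "Inl i \<in> edge_verts F" "Inr j \<in> edge_verts F"
    using assms(1) by (force simp: edge_verts_def)+
  then show ?thesis using assms(2) Pair by (auto simp: part1_def part2_def)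
qed

lemma Inl_part1_Un_Inr_part2: "Inl ` part1 C \<union> Inr ` part2 C = C"
proof (rule set_eqI)
  show "u \<in> Inl ` part1 C \<union> Inr ` part2 C \<longleftrightarrow> u \<in> C" for u
    by (cases u) (auto simp: part1_def part2_def)
qed

lemma card_Inl_Un_Inr:
  assumes "finite S1" "finite S2"
  shows "card (Inl ` S1 \<union> Inr ` S2) = card S1 + card S2"
  using assms by (subst card_Un_disjoint) (auto simp: card_image)

definition cut_edges :: "nat \<Rightarrow> nat \<Rightarrow> nat set \<Rightarrow> nat set \<Rightarrow> (nat \<times> nat) set" where
  "cut_edges n1 n2 S1 S2 = S1 \<times> ({..<n2} - S2) \<union> ({..<n1} - S1) \<times> S2"

lemma card_cut_edges:
  assumes "S1 \<subseteq> {..<n1}" "S2 \<subseteq> {..<n2}"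
  shows "card (cut_edges n1 n2 S1 S2) = card S1 * (n2 - card S2) + card S2 * (n1 - card S1)"
proof -
  have fin: "finite S1" "finite S2" using assms finite_subset by blast+
  then have "card (cut_edges n1 n2 S1 S2) = card (S1 \<times> ({..<n2} - S2)) + card (({..<n1} - S1) \<times> S2)"
    unfolding cut_edges_def by (intro card_Un_disjoint) auto
  then show ?thesis
    using assms fin by (simp add: card_cartesian_product card_Diff_subset)
qed

lemma bip_component_subset_vertices:
  assumes "E \<subseteq> {..<n1} \<times> {..<n2}" "C \<in> bip_components n1 n2 E"
  shows "C \<subseteq> bip_vertices n1 n2"
proof -
  obtain v where v: "v \<in> bip_vertices n1 n2" and C: "C = {u. (bip_adj E)\<^sup>*\<^sup>* v u}"
    using assms(2) by (auto simp: bip_components_def)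
  have "u \<in> bip_vertices n1 n2" if "(bip_adj E)\<^sup>*\<^sup>* v u" for u
    using that
  proof (induction rule: rtranclp_induct)
    case (step y z)
    then show ?case using assms(1) by (auto simp: bip_adj_def bip_vertices_def)
  qed (use v in simp)
  then show ?thesis using C by blast
qed

lemma parts_bip_component_subset:
  assumes "E \<subseteq> {..<n1} \<times> {..<n2}" "C \<in> bip_components n1 n2 E"
  shows "part1 C \<subseteq> {..<n1}" "part2 C \<subseteq> {..<n2}"
  using bip_component_subset_vertices[OF assms]
  by (auto simp: part1_def part2_def bip_vertices_def)

lemma bip_component_closed:
  assumes "C \<in> bip_components n1 n2 E" "u \<in> C" "bip_adj E u w"
  shows "w \<in> C"
  using assms by (auto simp: bip_components_def intro: rtranclp.rtrancl_into_rtrancl)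

lemma bip_component_no_cut_edges:
  assumes "C \<in> bip_components n1 n2 E"
  shows "E \<inter> cut_edges n1 n2 (part1 C) (part2 C) = {}"
proof -
  have "Inl i \<in> C \<longleftrightarrow> Inr j \<in> C" if "(i, j) \<in> E" for i j
    using bip_component_closed[OF assms, of "Inl i" "Inr j"]
      bip_component_closed[OF assms, of "Inr j" "Inl i"] that
    by (auto simp: bip_adj_def)
  then show ?thesis by (auto simp: cut_edges_def part1_def part2_def)
qed

section \<open>Forests and spanning trees\<close>

definition edge_degree :: "(nat \<times> nat) set \<Rightarrow> nat + nat \<Rightarrow> nat" where
  "edge_degree F v = card {e \<in> F. v \<in> edge_verts {e}}"

definition is_forest :: "(nat \<times> nat) set \<Rightarrow> bool" where
  "is_forest T \<longleftrightarrow> (\<forall>D \<subseteq> T. D \<noteq> {} \<longrightarrow> (\<exists>v \<in> edge_verts D. edge_degree D v = 1))"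

lemma edge_degree_cycle:
  assumes "is_cycle F"
  shows "edge_degree F v \<in> {0, 2}"
proof (cases "v \<in> edge_verts F")
  case False
  then have "{e \<in> F. v \<in> edge_verts {e}} = {}" by (auto simp: edge_verts_eq_UN[of F])
  then show ?thesis unfolding edge_degree_def by (simp only: card.empty) simp
qed (use assms in \<open>simp add: is_cycle_def edge_degree_def\<close>)

lemma edge_degree_symdiff:
  assumes "finite F1" "finite F2"
  shows "edge_degree ((F1 - F2) \<union> (F2 - F1)) v + 2 * edge_degree (F1 \<inter> F2) v
    = edge_degree F1 v + edge_degree F2 v"
proof -
  have split: "edge_degree A v = edge_degree A1 v + edge_degree A2 v"
    if "A = A1 \<union> A2" "A1 \<inter> A2 = {}" "finite A" for A A1 A2
    unfolding edge_degree_def using that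
    by (subst card_Un_disjoint[symmetric]) (auto intro: arg_cong[where f = card])
  have "edge_degree F1 v = edge_degree (F1 - F2) v + edge_degree (F1 \<inter> F2) v"
    by (rule split) (use assms in auto)
  moreover have "edge_degree F2 v = edge_degree (F2 - F1) v + edge_degree (F1 \<inter> F2) v"
    by (rule split) (use assms in auto)
  moreover have "edge_degree ((F1 - F2) \<union> (F2 - F1)) v = edge_degree (F1 - F2) v + edge_degree (F2 - F1) v"
    by (rule split) (use assms in auto)
  ultimately show ?thesis by simp
qed

lemma cycle_not_subset_forest:
  assumes "is_forest T" "is_cycle F"
  shows "\<not> F \<subseteq> T"
proof
  assume "F \<subseteq> T"
  moreover have "F \<noteq> {}" using assms(2) by (simp add: is_cycle_def)
  ultimately obtain v where "v \<in> edge_verts F" "edge_degree F v = 1"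
    using assms(1) by (auto simp: is_forest_def)
  then show False using assms(2) by (simp add: is_cycle_def edge_degree_def)
qed

lemma two_edges_outside_forest:
  assumes T: "is_forest T" and F: "is_cycle F1" "is_cycle F2" "F1 \<noteq> F2"
  obtains e1 e2 where "e1 \<noteq> e2" "e1 \<in> F1 \<union> F2 - T" "e2 \<in> F1 \<union> F2 - T"
proof -
  obtain e1 where e1: "e1 \<in> F1 - T" using cycle_not_subset_forest[OF T F(1)] by blast
  have "\<exists>e2. e2 \<noteq> e1 \<and> e2 \<in> F1 \<union> F2 - T"
  proof (rule ccontr)
    assume no_e2: "\<not> ?thesis"
    define D where "D = (F1 - F2) \<union> (F2 - F1)"
    have "e1 \<in> F2"
      using cycle_not_subset_forest[OF T F(2)] no_e2 e1 by auto
    then have "D \<subseteq> T" "D \<noteq> {}" using no_e2 e1 F(3) by (auto simp: D_def)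
    then obtain v where "edge_degree D v = 1" using T by (auto simp: is_forest_def)
    moreover have "finite F1" "finite F2" using F by (auto simp: is_cycle_def)
    ultimately have "edge_degree F1 v + edge_degree F2 v = 1 + 2 * edge_degree (F1 \<inter> F2) v"
      using edge_degree_symdiff[of F1 F2 v] unfolding D_def by simp
    then show False
      using edge_degree_cycle[OF F(1), of v] edge_degree_cycle[OF F(2), of v] by auto presburger+
  qed
  then show ?thesis using e1 that by blast
qed

lemma reachable_parent_map:
  obtains par :: "'a \<Rightarrow> 'a" and h :: "'a \<Rightarrow> nat"
  where "\<And>u. R\<^sup>*\<^sup>* v u \<Longrightarrow> u \<noteq> v \<Longrightarrow> R\<^sup>*\<^sup>* v (par u) \<and> R (par u) u \<and> h (par u) < h u"
proof -
  define h where "h u = (LEAST m. (R ^^ m) v u)" for u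
  have parent_exists: "\<exists>w. R\<^sup>*\<^sup>* v w \<and> R w u \<and> h w < h u" if reach: "R\<^sup>*\<^sup>* v u" and "u \<noteq> v" for u
  proof -
    obtain m where "(R ^^ m) v u" using rtranclp_imp_relpowp[OF reach] by blast
    then have shortest: "(R ^^ h u) v u" unfolding h_def by (rule LeastI)
    then obtain k where k: "h u = Suc k" using \<open>u \<noteq> v\<close> by (cases "h u") auto
    then obtain w where w: "(R ^^ k) v w" "R w u" using shortest by (auto elim: relpowp_Suc_E)
    have "h w \<le> k" unfolding h_def using w(1) by (rule Least_le)
    then show ?thesis using w k relpowp_imp_rtranclp by fastforce
  qed
  define par where "par u = (SOME w. R\<^sup>*\<^sup>* v w \<and> R w u \<and> h w < h u)" for u
  show ?thesis
  proof (rule that[of par h])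
    fix u assume "R\<^sup>*\<^sup>* v u" "u \<noteq> v"
    from someI_ex[OF parent_exists[OF this]]
    show "R\<^sup>*\<^sup>* v (par u) \<and> R (par u) u \<and> h (par u) < h u" unfolding par_def .
  qed
qed

lemma is_forest_parent_edges:
  fixes t :: "nat + nat \<Rightarrow> nat \<times> nat" and h :: "nat + nat \<Rightarrow> nat"
  assumes "finite U"
    and edge: "\<And>u. u \<in> U \<Longrightarrow> edge_verts {t u} = {u, par u}"
    and descent: "\<And>u. u \<in> U \<Longrightarrow> h (par u) < h u"
  shows "is_forest (t ` U)"
  unfolding is_forest_def
proof (intro allI impI)
  fix D assume D: "D \<subseteq> t ` U" "D \<noteq> {}"
  define X where "X = edge_verts D"
  have "finite D" using D(1) assms(1) finite_surj by blast
  then have "finite X" "X \<noteq> {}" using D(2) by (auto simp: X_def edge_verts_def)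
  then have "Max (h ` X) \<in> h ` X" by (intro Max_in) auto
  then obtain w where w: "w \<in> X" "h w = Max (h ` X)" by auto
  have "e = t w" if e: "e \<in> D" and w_e: "w \<in> edge_verts {e}" for e
  proof -
    obtain u where u: "u \<in> U" "e = t u" using e D(1) by blast
    have "u \<in> X" using e edge[OF u(1)] u(2) by (auto simp: X_def edge_verts_eq_UN[of D])
    then have "h u \<le> h w" using w \<open>finite X\<close> by simp
    then show ?thesis using w_e edge[OF u(1)] descent[OF u(1)] u(2) by auto
  qed
  moreover obtain e0 where "e0 \<in> D" "w \<in> edge_verts {e0}"
    using w(1) by (auto simp: X_def edge_verts_eq_UN[of D])
  ultimately have "{e \<in> D. w \<in> edge_verts {e}} = {t w}" by blast
  then have "edge_degree D w = 1" by (simp add: edge_degree_def)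
  moreover have "w \<in> edge_verts D" using w(1) by (simp add: X_def)
  ultimately show "\<exists>v\<in>edge_verts D. edge_degree D v = 1" by blast
qed

lemma inj_on_parent_edges:
  fixes t :: "nat + nat \<Rightarrow> nat \<times> nat" and h :: "nat + nat \<Rightarrow> nat"
  assumes edge: "\<And>u. u \<in> U \<Longrightarrow> edge_verts {t u} = {u, par u}"
    and descent: "\<And>u. u \<in> U \<Longrightarrow> h (par u) < h u"
  shows "inj_on t U"
proof (rule inj_onI, rule ccontr)
  fix u w assume u: "u \<in> U" and w: "w \<in> U" and "t u = t w" "u \<noteq> w"
  then have "{u, par u} = {w, par w}" using edge[OF u] edge[OF w] by simp
  then have "u = par w" "w = par u" using \<open>u \<noteq> w\<close> by (metis doubleton_eq_iff)+
  then show False using descent[OF u] descent[OF w] by (metis less_not_sym)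
qed

definition parent_edge :: "(nat \<Rightarrow> nat) \<Rightarrow> (nat \<Rightarrow> nat) \<Rightarrow> nat + nat \<Rightarrow> nat \<times> nat" where
  "parent_edge p1 p2 u = (case u of Inl i \<Rightarrow> (i, p1 i) | Inr j \<Rightarrow> (p2 j, j))"

lemma bip_parent_maps:
  assumes par: "\<And>u. u \<in> C - {v} \<Longrightarrow> par u \<in> C \<and> bip_adj E (par u) u"
    and e0: "e0 \<in> part1 C \<times> part2 C"
  obtains p1 p2 where "p1 \<in> part1 C \<rightarrow>\<^sub>E part2 C" "p2 \<in> part2 C \<rightarrow>\<^sub>E part1 C"
    "\<And>u. u \<in> C - {v} \<Longrightarrow> parent_edge p1 p2 u \<in> E \<and> edge_verts {parent_edge p1 p2 u} = {u, par u}"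
proof -
  define p1 where "p1 = (\<lambda>i \<in> part1 C. if Inl i = v then snd e0 else projr (par (Inl i)))"
  define p2 where "p2 = (\<lambda>j \<in> part2 C. if Inr j = v then fst e0 else projl (par (Inr j)))"
  have edge: "parent_edge p1 p2 u \<in> E \<and> edge_verts {parent_edge p1 p2 u} = {u, par u}"
    if u: "u \<in> C - {v}" for u
  proof (cases u)
    case (Inl i)
    then obtain j where "par u = Inr j" "(i, j) \<in> E" using par[OF u] by (auto simp: bip_adj_def)
    then show ?thesis using u Inl by (auto simp: parent_edge_def p1_def part1_def)
  next
    case (Inr j)
    then obtain i where "par u = Inl i" "(i, j) \<in> E" using par[OF u] by (auto simp: bip_adj_def)
    then show ?thesis using u Inr by (auto simp: parent_edge_def p2_def part2_def)
  qed
  have "p1 i \<in> part2 C" if "i \<in> part1 C" for i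
  proof (cases "Inl i = v")
    case False
    then have "Inl i \<in> C - {v}" using that by (simp add: part1_def)
    then have "{Inl i, Inr (p1 i)} = {Inl i, par (Inl i)}" "par (Inl i) \<in> C"
      using edge[of "Inl i"] par[of "Inl i"] by (simp_all add: parent_edge_def)
    then show ?thesis by (auto simp: part2_def doubleton_eq_iff)
  qed (use that e0 in \<open>auto simp: p1_def\<close>)
  moreover have "p2 j \<in> part1 C" if "j \<in> part2 C" for j
  proof (cases "Inr j = v")
    case False
    then have "Inr j \<in> C - {v}" using that by (simp add: part2_def)
    then have "{Inl (p2 j), Inr j} = {Inr j, par (Inr j)}" "par (Inr j) \<in> C"
      using edge[of "Inr j"] par[of "Inr j"] by (simp_all add: parent_edge_def)
    then show ?thesis by (auto simp: part1_def doubleton_eq_iff)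
  qed (use that e0 in \<open>auto simp: p2_def\<close>)
  moreover have "p1 \<in> extensional (part1 C)" "p2 \<in> extensional (part2 C)"
    by (simp_all add: p1_def p2_def)
  ultimately have "p1 \<in> part1 C \<rightarrow>\<^sub>E part2 C" "p2 \<in> part2 C \<rightarrow>\<^sub>E part1 C"
    by (simp_all add: PiE_iff)
  then show ?thesis using that edge by blast
qed

lemma component_spanning_forest:
  assumes C: "C = {u. (bip_adj E)\<^sup>*\<^sup>* v u}" "finite C" and e0: "e0 \<in> part1 C \<times> part2 C"
  obtains p1 p2 where "p1 \<in> part1 C \<rightarrow>\<^sub>E part2 C" "p2 \<in> part2 C \<rightarrow>\<^sub>E part1 C"
    "inj_on (parent_edge p1 p2) (C - {v})" "parent_edge p1 p2 ` (C - {v}) \<subseteq> E"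
    "is_forest (parent_edge p1 p2 ` (C - {v}))"
proof -
  obtain par and h :: "nat + nat \<Rightarrow> nat" where parent: "\<And>u. (bip_adj E)\<^sup>*\<^sup>* v u \<Longrightarrow> u \<noteq> v
      \<Longrightarrow> (bip_adj E)\<^sup>*\<^sup>* v (par u) \<and> bip_adj E (par u) u \<and> h (par u) < h u"
    using reachable_parent_map[of "bip_adj E" v] by blast
  have par: "par u \<in> C \<and> bip_adj E (par u) u" and descent: "h (par u) < h u"
    if "u \<in> C - {v}" for u
    using parent[of u] that C(1) by simp_all
  obtain p1 p2 where p: "p1 \<in> part1 C \<rightarrow>\<^sub>E part2 C" "p2 \<in> part2 C \<rightarrow>\<^sub>E part1 C"
    and edge: "\<And>u. u \<in> C - {v} \<Longrightarrow> parent_edge p1 p2 u \<in> E \<and> edge_verts {parent_edge p1 p2 u} = {u, par u}"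
    using bip_parent_maps[OF par e0] by blast
  show ?thesis
  proof (rule that[OF p])
    show "inj_on (parent_edge p1 p2) (C - {v})"
      using edge descent by (intro inj_on_parent_edges[where h = h]) auto
    show "parent_edge p1 p2 ` (C - {v}) \<subseteq> E" using edge by blast
    show "is_forest (parent_edge p1 p2 ` (C - {v}))"
      using C(2) edge descent by (intro is_forest_parent_edges[where h = h]) auto
  qed
qed

section \<open>Witnesses of complex components\<close>

text \<open>A witness \<open>(p1, p2, r, e1, e2)\<close> for a complex component on \<open>S1 \<union> S2\<close> is a spanning
  tree with root \<open>r\<close>, given by parent maps \<open>p1 : S1 \<rightarrow> S2\<close> and \<open>p2 : S2 \<rightarrow> S1\<close> (their values at
  the root are irrelevant), together with two further edges. Only witnesses whose
  \<open>card S1 + card S2 + 1\<close> edges are distinct are counted, so that each has probability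
  exactly \<open>p ^ (card S1 + card S2 + 1)\<close>.\<close>

definition witness_codes :: "nat set \<Rightarrow> nat set
    \<Rightarrow> ((nat \<Rightarrow> nat) \<times> (nat \<Rightarrow> nat) \<times> (nat + nat) \<times> (nat \<times> nat) \<times> (nat \<times> nat)) set" where
  "witness_codes S1 S2 = (S1 \<rightarrow>\<^sub>E S2) \<times> (S2 \<rightarrow>\<^sub>E S1) \<times> (Inl ` S1 \<union> Inr ` S2) \<times> (S1 \<times> S2) \<times> (S1 \<times> S2)"

definition witness_edges :: "nat set \<Rightarrow> nat set
    \<Rightarrow> (nat \<Rightarrow> nat) \<times> (nat \<Rightarrow> nat) \<times> (nat + nat) \<times> (nat \<times> nat) \<times> (nat \<times> nat) \<Rightarrow> (nat \<times> nat) set" where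
  "witness_edges S1 S2 = (\<lambda>(p1, p2, r, e1, e2). parent_edge p1 p2 ` (Inl ` S1 \<union> Inr ` S2 - {r}) \<union> {e1, e2})"

definition witnessed_on :: "nat \<Rightarrow> nat \<Rightarrow> nat set \<Rightarrow> nat set \<Rightarrow> (nat \<times> nat) set set" where
  "witnessed_on n1 n2 S1 S2 = {E. \<exists>c \<in> witness_codes S1 S2.
     card (witness_edges S1 S2 c) = card S1 + card S2 + 1 \<and> witness_edges S1 S2 c \<subseteq> E \<and>
     E \<inter> cut_edges n1 n2 S1 S2 = {}}"

lemma card_witness_codes:
  assumes "finite S1" "finite S2"
  shows "card (witness_codes S1 S2)
    = card S2 ^ card S1 * card S1 ^ card S2 * (card S1 + card S2) * (card S1 * card S2) ^ 2"
  using assms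
  by (simp add: witness_codes_def card_cartesian_product card_funcsetE card_Inl_Un_Inr power2_eq_square)

lemma witness_edges_subset:
  assumes "c \<in> witness_codes S1 S2"
  shows "witness_edges S1 S2 c \<subseteq> S1 \<times> S2"
  using assms by (auto simp: witness_codes_def witness_edges_def parent_edge_def PiE_iff)

lemma card_witness_edges:
  assumes "finite S1" "finite S2" "r \<in> Inl ` S1 \<union> Inr ` S2"
    and inj: "inj_on (parent_edge p1 p2) (Inl ` S1 \<union> Inr ` S2 - {r})"
    and "e1 \<noteq> e2" "e1 \<notin> parent_edge p1 p2 ` (Inl ` S1 \<union> Inr ` S2 - {r})"
    "e2 \<notin> parent_edge p1 p2 ` (Inl ` S1 \<union> Inr ` S2 - {r})"
  shows "card (witness_edges S1 S2 (p1, p2, r, e1, e2)) = card S1 + card S2 + 1"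
proof -
  have "card (Inl ` S1 \<union> Inr ` S2) = card S1 + card S2" "card (Inl ` S1 \<union> Inr ` S2) > 0"
    using assms(1-3) card_Inl_Un_Inr by (auto simp: card_gt_0_iff)
  then have "card (parent_edge p1 p2 ` (Inl ` S1 \<union> Inr ` S2 - {r})) + 1 = card S1 + card S2"
    using assms(1-3) by (simp add: card_image[OF inj])
  then show ?thesis using assms(1,2,5-7) by (simp add: witness_edges_def card_insert_if)
qed

lemma complex_component_witnessed:
  assumes E: "E \<subseteq> {..<n1} \<times> {..<n2}" and C: "C \<in> bip_components n1 n2 E"
    and complex: "is_complex E C"
  shows "E \<in> witnessed_on n1 n2 (part1 C) (part2 C)"
proof -
  obtain v where v: "C = {u. (bip_adj E)\<^sup>*\<^sup>* v u}"
    using C by (auto simp: bip_components_def)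
  have fin: "finite (part1 C)" "finite (part2 C)"
    using parts_bip_component_subset[OF E C] finite_subset by blast+
  have C_eq: "Inl ` part1 C \<union> Inr ` part2 C = C" by (rule Inl_part1_Un_Inr_part2)
  then have "finite C" using fin by (metis finite_Un finite_imageI)
  obtain F1 F2 where F: "F1 \<noteq> F2" "is_cycle F1" "is_cycle F2" "F1 \<subseteq> E" "F2 \<subseteq> E"
    "edge_verts F1 \<subseteq> C" "edge_verts F2 \<subseteq> C"
    using complex by (auto simp: is_complex_def)
  then have F_parts: "F1 \<union> F2 \<subseteq> part1 C \<times> part2 C" using edge_in_parts by blast
  obtain e0 where "e0 \<in> F1" using F(2) by (auto simp: is_cycle_def)
  then obtain p1 p2 where p: "p1 \<in> part1 C \<rightarrow>\<^sub>E part2 C" "p2 \<in> part2 C \<rightarrow>\<^sub>E part1 C"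
    and inj: "inj_on (parent_edge p1 p2) (C - {v})"
    and tree: "parent_edge p1 p2 ` (C - {v}) \<subseteq> E" "is_forest (parent_edge p1 p2 ` (C - {v}))"
    using component_spanning_forest[OF v \<open>finite C\<close>] F_parts by blast
  obtain e1 e2 where e: "e1 \<noteq> e2" "e1 \<in> F1 \<union> F2 - parent_edge p1 p2 ` (C - {v})"
    "e2 \<in> F1 \<union> F2 - parent_edge p1 p2 ` (C - {v})"
    using two_edges_outside_forest[OF tree(2) F(2,3,1)] by blast
  have "v \<in> C" using v by simp
  have "(p1, p2, v, e1, e2) \<in> witness_codes (part1 C) (part2 C)"
    using p \<open>v \<in> C\<close> e F_parts by (auto simp: witness_codes_def C_eq)
  moreover have "card (witness_edges (part1 C) (part2 C) (p1, p2, v, e1, e2))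
      = card (part1 C) + card (part2 C) + 1"
    using fin \<open>v \<in> C\<close> inj e by (intro card_witness_edges) (auto simp: C_eq)
  moreover have "witness_edges (part1 C) (part2 C) (p1, p2, v, e1, e2) \<subseteq> E"
    using tree(1) e F(4,5) by (auto simp: witness_edges_def C_eq)
  ultimately show ?thesis
    using bip_component_no_cut_edges[OF C] unfolding witnessed_on_def by blast
qed

section \<open>The first moment bound\<close>

lemma power_div_fact_le_exp:
  fixes y :: real
  assumes "0 \<le> y"
  shows "y ^ n / fact n \<le> exp y"
proof -
  have "y ^ n / fact n = (\<Sum>m\<in>{n}. inverse (fact m) * y ^ m)" by (simp add: field_simps)
  also have "\<dots> \<le> (\<Sum>m. inverse (fact m) * y ^ m)"
    using assms by (intro sum_le_suminf[OF summable_exp]) auto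
  finally show ?thesis by (simp add: exp_def)
qed

lemma binomial_mult_power_le_exp:
  fixes y :: real
  assumes "0 \<le> y"
  shows "real (n choose a) * y ^ a \<le> exp (real n * y)"
proof -
  have "real (n choose a) * fact a \<le> real n ^ a"
    using of_nat_mono[OF binomial_fact_pow[of n a]] by simp
  then have "real (n choose a) * y ^ a \<le> real n ^ a / fact a * y ^ a"
    using assms by (intro mult_right_mono) (auto simp: field_simps)
  also have "\<dots> = (real n * y) ^ a / fact a" by (simp add: power_mult_distrib)
  also have "\<dots> \<le> exp (real n * y)"
    using assms by (intro power_div_fact_le_exp) simp
  finally show ?thesis .
qed

text \<open>The factor \<open>(1 - p) ^ m \<le> exp (- p m)\<close> contributed by the absent cut edges pays for
  the choice of the two parts.\<close>
lemma expected_witnesses_le: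
  fixes p :: real and n1 n2 a b :: nat
  assumes p: "0 \<le> p" "p \<le> 1"
  shows "real (n1 choose a) * real (n2 choose b) *
      (real (b ^ a * a ^ b * (a + b) * (a * b) ^ 2) *
       (p ^ (a + b + 1) * (1 - p) ^ (a * (n2 - b) + b * (n1 - a))))
    \<le> real (a + b) * (real a * real b) ^ 2 * p * exp (2 * p * real a * real b)"
    (is "?L \<le> ?R")
proof (cases "a \<le> n1 \<and> b \<le> n2")
  case False
  then have "?L = 0" by auto
  moreover have "0 \<le> ?R" using p by simp
  ultimately show ?thesis by linarith
next
  case True
  define m where "m = a * (n2 - b) + b * (n1 - a)"
  have "real m = real a * (real n2 - real b) + real b * (real n1 - real a)"
    using True by (simp add: m_def of_nat_diff)
  then have m: "real m = real a * real n2 + real b * real n1 - 2 * real a * real b"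
    by (simp add: algebra_simps)
  have "(1 - p) ^ m \<le> exp (- p) ^ m"
    using p by (intro power_mono) (auto simp: exp_ge_add_one_self[of "-p", simplified])
  also have "\<dots> = exp (- p * real m)" by (simp add: exp_of_nat_mult[symmetric] mult_ac)
  finally have cut: "(1 - p) ^ m \<le> exp (- p * real m)" .
  define R where "R = real (a + b) * (real a * real b) ^ 2 * p"
  have "R \<ge> 0" using p by (simp add: R_def)
  have "?L = (real (n1 choose a) * (real b * p) ^ a) * (real (n2 choose b) * (real a * p) ^ b) * R * (1 - p) ^ m"
    by (simp add: R_def m_def power_add power_mult_distrib mult_ac)
  also have "\<dots> \<le> exp (real n1 * (real b * p)) * exp (real n2 * (real a * p)) * R * exp (- p * real m)"
    using p cut \<open>R \<ge> 0\<close>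
    by (intro mult_mono binomial_mult_power_le_exp) (auto simp: zero_le_mult_iff)
  also have "\<dots> = R * exp (real n1 * (real b * p) + real n2 * (real a * p) - p * real m)"
    by (simp add: exp_add exp_diff exp_minus field_simps)
  also have "\<dots> = ?R" unfolding m by (simp add: R_def algebra_simps)
  finally show ?thesis .
qed

lemma sum_subsets_by_card:
  fixes g :: "nat \<Rightarrow> real"
  assumes "finite A"
  shows "(\<Sum>S\<in>{S. S \<subseteq> A \<and> card S \<le> m}. g (card S)) = (\<Sum>a\<le>m. real (card A choose a) * g a)"
proof -
  have eq: "{S. S \<subseteq> A \<and> card S \<le> m} = (\<Union>a\<in>{..m}. {S. S \<subseteq> A \<and> card S = a})" by auto
  have fin: "finite {S. S \<subseteq> A \<and> card S = a}" for a
    using assms by (rule finite_subset[rotated, OF finite_Collect_subsets]) auto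
  have "(\<Sum>S\<in>{S. S \<subseteq> A \<and> card S \<le> m}. g (card S)) = (\<Sum>a\<le>m. \<Sum>S\<in>{S. S \<subseteq> A \<and> card S = a}. g a)"
    unfolding eq by (subst sum.UNION_disjoint) (auto simp: fin intro!: sum.cong)
  also have "\<dots> = (\<Sum>a\<le>m. real (card A choose a) * g a)"
    using n_subsets[OF assms] by simp
  finally show ?thesis .
qed

lemma sum_parts_by_card:
  fixes F :: "nat \<Rightarrow> nat \<Rightarrow> real"
  shows "(\<Sum>(S1, S2) \<in> {S1. S1 \<subseteq> {..<n1} \<and> card S1 \<le> Ma} \<times> {S2. S2 \<subseteq> {..<n2} \<and> card S2 \<le> Kb}.
      F (card S1) (card S2)) = (\<Sum>a\<le>Ma. \<Sum>b\<le>Kb. real (n1 choose a) * real (n2 choose b) * F a b)"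
proof -
  have "(\<Sum>(S1, S2) \<in> {S1. S1 \<subseteq> {..<n1} \<and> card S1 \<le> Ma} \<times> {S2. S2 \<subseteq> {..<n2} \<and> card S2 \<le> Kb}.
      F (card S1) (card S2))
      = (\<Sum>S1 \<in> {S1. S1 \<subseteq> {..<n1} \<and> card S1 \<le> Ma}. \<Sum>b\<le>Kb. real (n2 choose b) * F (card S1) b)"
    unfolding sum.cartesian_product[symmetric]
    using sum_subsets_by_card[of "{..<n2}" "F _" Kb] by simp
  also have "\<dots> = (\<Sum>a\<le>Ma. real (n1 choose a) * (\<Sum>b\<le>Kb. real (n2 choose b) * F a b))"
    using sum_subsets_by_card[of "{..<n1}" "\<lambda>a. \<Sum>b\<le>Kb. real (n2 choose b) * F a b" Ma] by simp
  finally show ?thesis by (simp add: sum_distrib_left mult_ac)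
qed

lemma prob_witnessed_on_le:
  assumes S: "S1 \<subseteq> {..<n1}" "S2 \<subseteq> {..<n2}" and p: "0 \<le> p" "p \<le> 1"
  shows "measure_pmf.prob (Gbip n1 n2 p) (witnessed_on n1 n2 S1 S2)
    \<le> real (card (witness_codes S1 S2)) *
      (p ^ (card S1 + card S2 + 1) * (1 - p) ^ (card S1 * (n2 - card S2) + card S2 * (n1 - card S1)))"
proof -
  define K where "K = {c \<in> witness_codes S1 S2. card (witness_edges S1 S2 c) = card S1 + card S2 + 1}"
  define q where "q = p ^ (card S1 + card S2 + 1) * (1 - p) ^ (card S1 * (n2 - card S2) + card S2 * (n1 - card S1))"
  have fin: "finite S1" "finite S2" using S finite_subset by blast+
  then have "finite (witness_codes S1 S2)"
    by (simp add: witness_codes_def finite_PiE)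
  then have "finite K" "card K \<le> card (witness_codes S1 S2)"
    by (simp_all add: K_def card_mono)
  have each: "measure_pmf.prob (Gbip n1 n2 p)
      {E. witness_edges S1 S2 c \<subseteq> E \<and> E \<inter> cut_edges n1 n2 S1 S2 = {}} = q" if "c \<in> K" for c
  proof -
    have W: "witness_edges S1 S2 c \<subseteq> S1 \<times> S2" using that witness_edges_subset by (auto simp: K_def)
    then have "witness_edges S1 S2 c \<subseteq> {..<n1} \<times> {..<n2}"
      "witness_edges S1 S2 c \<inter> cut_edges n1 n2 S1 S2 = {}"
      using S by (auto simp: cut_edges_def)
    moreover have "cut_edges n1 n2 S1 S2 \<subseteq> {..<n1} \<times> {..<n2}"
      using S by (auto simp: cut_edges_def)
    ultimately show ?thesis
      using that p by (simp add: prob_Gbip_contains_avoids card_cut_edges[OF S] K_def q_def)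
  qed
  have "witnessed_on n1 n2 S1 S2
      = (\<Union>c\<in>K. {E. witness_edges S1 S2 c \<subseteq> E \<and> E \<inter> cut_edges n1 n2 S1 S2 = {}})"
    by (auto simp: witnessed_on_def K_def)
  then have "measure_pmf.prob (Gbip n1 n2 p) (witnessed_on n1 n2 S1 S2)
      \<le> (\<Sum>c\<in>K. measure_pmf.prob (Gbip n1 n2 p)
            {E. witness_edges S1 S2 c \<subseteq> E \<and> E \<inter> cut_edges n1 n2 S1 S2 = {}})"
    using \<open>finite K\<close> by (simp add: measure_UNION_le)
  also have "\<dots> = real (card K) * q" using each by simp
  also have "\<dots> \<le> real (card (witness_codes S1 S2)) * q"
    using \<open>card K \<le> _\<close> p by (intro mult_right_mono) (auto simp: q_def)
  finally show ?thesis by (simp add: q_def)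
qed

lemma prob_complex_component_le_sum:
  assumes p: "0 \<le> p" "p \<le> 1"
  shows "measure_pmf.prob (Gbip n1 n2 p) {E. \<exists>C\<in>bip_components n1 n2 E.
            card (part1 C) \<le> Ma \<and> card (part2 C) \<le> Kb \<and> is_complex E C}
     \<le> (\<Sum>a\<le>Ma. \<Sum>b\<le>Kb. real (a + b) * (real a * real b) ^ 2 * p * exp (2 * p * real a * real b))"
    (is "measure_pmf.prob ?M ?bad \<le> _")
proof -
  define A1 where "A1 = {S1. S1 \<subseteq> {..<n1} \<and> card S1 \<le> Ma}"
  define A2 where "A2 = {S2. S2 \<subseteq> {..<n2} \<and> card S2 \<le> Kb}"
  define F where "F a b = real (b ^ a * a ^ b * (a + b) * (a * b) ^ 2) *
      (p ^ (a + b + 1) * (1 - p) ^ (a * (n2 - b) + b * (n1 - a)))" for a b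
  have "finite A1" "finite A2"
    by (auto simp: A1_def A2_def intro: finite_subset[of _ "Pow {..<n1}"] finite_subset[of _ "Pow {..<n2}"])
  have "?bad \<inter> set_pmf ?M \<subseteq> (\<Union>(S1, S2) \<in> A1 \<times> A2. witnessed_on n1 n2 S1 S2)"
  proof
    fix E assume "E \<in> ?bad \<inter> set_pmf ?M"
    then obtain C where C: "C \<in> bip_components n1 n2 E" "is_complex E C"
      "card (part1 C) \<le> Ma" "card (part2 C) \<le> Kb" and E: "E \<subseteq> {..<n1} \<times> {..<n2}"
      using set_pmf_Gbip_subset by blast
    have "E \<in> witnessed_on n1 n2 (part1 C) (part2 C)"
      using complex_component_witnessed[OF E C(1,2)] .
    moreover have "(part1 C, part2 C) \<in> A1 \<times> A2"
      using parts_bip_component_subset[OF E C(1)] C(3,4) by (simp add: A1_def A2_def)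
    ultimately show "E \<in> (\<Union>(S1, S2) \<in> A1 \<times> A2. witnessed_on n1 n2 S1 S2)" by blast
  qed
  then have "measure_pmf.prob ?M ?bad \<le> measure_pmf.prob ?M (\<Union>(S1, S2) \<in> A1 \<times> A2. witnessed_on n1 n2 S1 S2)"
    by (subst measure_Int_set_pmf[symmetric]) (intro measure_pmf.finite_measure_mono, auto)
  also have "\<dots> \<le> (\<Sum>(S1, S2) \<in> A1 \<times> A2. measure_pmf.prob ?M (witnessed_on n1 n2 S1 S2))"
    using \<open>finite A1\<close> \<open>finite A2\<close>
      measure_UNION_le[where F = "\<lambda>(S1, S2). witnessed_on n1 n2 S1 S2" and I = "A1 \<times> A2" and M = ?M]
    by (simp add: split_def)
  also have "\<dots> \<le> (\<Sum>(S1, S2) \<in> A1 \<times> A2. F (card S1) (card S2))"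
  proof (rule sum_mono)
    fix x assume "x \<in> A1 \<times> A2"
    then obtain S1 S2 where x: "x = (S1, S2)" and S: "S1 \<subseteq> {..<n1}" "S2 \<subseteq> {..<n2}"
      by (auto simp: A1_def A2_def)
    then have "finite S1" "finite S2" by (auto intro: finite_subset)
    then show "(case x of (S1, S2) \<Rightarrow> measure_pmf.prob ?M (witnessed_on n1 n2 S1 S2))
        \<le> (case x of (S1, S2) \<Rightarrow> F (card S1) (card S2))"
      using prob_witnessed_on_le[OF S p] by (simp add: x F_def card_witness_codes)
  qed
  also have "\<dots> = (\<Sum>a\<le>Ma. \<Sum>b\<le>Kb. real (n1 choose a) * real (n2 choose b) * F a b)"
    unfolding A1_def A2_def by (rule sum_parts_by_card)
  also have "\<dots> \<le> (\<Sum>a\<le>Ma. \<Sum>b\<le>Kb. real (a + b) * (real a * real b) ^ 2 * p * exp (2 * p * real a * real b))"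
    unfolding F_def using expected_witnesses_le[OF p] by (intro sum_mono) (simp add: mult.assoc)
  finally show ?thesis .
qed

lemma witness_bound_mono:
  fixes p x y x' y' :: real
  assumes "0 \<le> p" "0 \<le> x" "x \<le> x'" "0 \<le> y" "y \<le> y'"
  shows "(x + y) * (x * y) ^ 2 * p * exp (2 * p * x * y) \<le> (x' + y') * (x' * y') ^ 2 * p * exp (2 * p * x' * y')"
proof -
  have "x * y \<le> x' * y'" using assms by (intro mult_mono) auto
  then have "exp (2 * p * (x * y)) \<le> exp (2 * p * (x' * y'))"
    using assms(1) by (simp add: mult_left_mono)
  moreover have "(x * y) ^ 2 \<le> (x' * y') ^ 2"
    using assms \<open>x * y \<le> x' * y'\<close> by (intro power_mono) auto
  ultimately show ?thesis
    using assms by (intro mult_mono) (auto simp: mult.assoc)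
qed

lemma prob_small_complex_component_le:
  fixes L K :: real
  assumes p: "0 \<le> p" "p \<le> 1" and "0 \<le> L" "0 \<le> K"
  shows "measure_pmf.prob (Gbip n1 n2 p) {E. \<exists>C\<in>bip_components n1 n2 E.
            real (card (part1 C)) \<le> L \<and> real (card (part2 C)) \<le> K \<and> is_complex E C}
     \<le> (L + 1) * (K + 1) * ((L + K) * (L * K) ^ 2 * p * exp (2 * p * L * K))"
proof -
  define Ma Kb where "Ma = nat \<lfloor>L\<rfloor>" and "Kb = nat \<lfloor>K\<rfloor>"
  define T where "T = (L + K) * (L * K) ^ 2 * p * exp (2 * p * L * K)"
  have "real Ma \<le> L" "real Kb \<le> K" using assms by (simp_all add: Ma_def Kb_def)
  have "T \<ge> 0" using assms by (simp add: T_def)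
  have "measure_pmf.prob (Gbip n1 n2 p) {E. \<exists>C\<in>bip_components n1 n2 E.
            real (card (part1 C)) \<le> L \<and> real (card (part2 C)) \<le> K \<and> is_complex E C}
      \<le> measure_pmf.prob (Gbip n1 n2 p) {E. \<exists>C\<in>bip_components n1 n2 E.
            card (part1 C) \<le> Ma \<and> card (part2 C) \<le> Kb \<and> is_complex E C}"
    unfolding Ma_def Kb_def
    by (intro measure_pmf.finite_measure_mono) (auto intro: le_nat_floor)
  also have "\<dots> \<le> (\<Sum>a\<le>Ma. \<Sum>b\<le>Kb. real (a + b) * (real a * real b) ^ 2 * p * exp (2 * p * real a * real b))"
    by (rule prob_complex_component_le_sum[OF p])
  also have "\<dots> \<le> (\<Sum>a\<le>Ma. \<Sum>b\<le>Kb. T)"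
  proof (intro sum_mono)
    fix a b assume "a \<in> {..Ma}" "b \<in> {..Kb}"
    then have "real a \<le> L" "real b \<le> K"
      using \<open>real Ma \<le> L\<close> \<open>real Kb \<le> K\<close> by (auto dest!: of_nat_mono[where 'a = real])
    then show "real (a + b) * (real a * real b) ^ 2 * p * exp (2 * p * real a * real b) \<le> T"
      unfolding T_def of_nat_add using p by (intro witness_bound_mono) auto
  qed
  also have "\<dots> = (real Ma + 1) * (real Kb + 1) * T" by (simp add: algebra_simps)
  also have "\<dots> \<le> (L + 1) * (K + 1) * T"
    using \<open>real Ma \<le> L\<close> \<open>real Kb \<le> K\<close> \<open>T \<ge> 0\<close> assms by (intro mult_mono) auto
  finally show ?thesis unfolding T_def .
qed

lemma edge_probability_scaling:
  assumes "0 < lam" "real n1 = lam * real n2" "p = d / sqrt (real n1 * real n2)" "0 < n1"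
  shows "p = d * sqrt lam / real n1" "2 * p * real n2 = 2 * d / sqrt lam"
proof -
  have "sqrt (real n1 * real n2) = real n1 / sqrt lam"
  proof (rule real_sqrt_unique)
    have "real n2 = real n1 / lam" using assms(1,2) by (simp add: field_simps)
    then show "(real n1 / sqrt lam)\<^sup>2 = real n1 * real n2"
      using assms(1) by (simp add: power2_eq_square)
  qed (use assms(1) in simp)
  then show p: "p = d * sqrt lam / real n1" unfolding assms(3) by simp
  have "real n2 > 0" using assms(2,4) by (cases "n2 = 0") auto
  moreover have "sqrt lam * sqrt lam = lam" using assms(1) by simp
  ultimately show "2 * p * real n2 = 2 * d / sqrt lam"
    unfolding p assms(2) using assms(1) by (simp add: field_simps)
qed

lemma whp_not_if_prob_tendsto_0:
  assumes "(\<lambda>k. measure_pmf.prob (G k) {x. Q k x}) \<longlonglongrightarrow> 0"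
  shows "whp G (\<lambda>k x. \<not> Q k x)"
proof -
  have "measure_pmf.prob (G k) {x. \<not> Q k x} = 1 - measure_pmf.prob (G k) {x. Q k x}" for k
    using measure_pmf.prob_compl[of "{x. Q k x}" "G k"] by (simp add: Collect_neg_eq Compl_eq_Diff_UNIV)
  then show ?thesis
    unfolding whp_def using tendsto_diff[OF tendsto_const assms, of 1] by simp
qed

lemma prob_small_balanced_complex_le:
  fixes \<beta>0 c L :: real
  assumes p: "0 \<le> p" "p \<le> 1" and "0 \<le> \<beta>0"
    and c: "2 * p * real n2 = c" "0 \<le> c" and L: "L = \<beta>0 * ln (real n1) ^ 2"
  shows "measure_pmf.prob (Gbip n1 n2 p) {E. \<exists>C \<in> bip_components n1 n2 E.
            is_small \<beta>0 n1 C \<and> is_balanced p n2 C \<and> is_complex E C}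
     \<le> (L + 1) * (c * L + 1) * ((L + c * L) * (L * (c * L)) ^ 2 * p * exp (2 * p * L * (c * L)))"
proof -
  have "L \<ge> 0" using assms(3) by (simp add: L)
  have "real (card (part1 C)) \<le> L \<and> real (card (part2 C)) \<le> c * L"
    if "is_small \<beta>0 n1 C" "is_balanced p n2 C" for C
    using that c unfolding is_small_def is_balanced_def L by (smt (verit) mult_left_mono)
  then have "measure_pmf.prob (Gbip n1 n2 p) {E. \<exists>C \<in> bip_components n1 n2 E.
            is_small \<beta>0 n1 C \<and> is_balanced p n2 C \<and> is_complex E C}
      \<le> measure_pmf.prob (Gbip n1 n2 p) {E. \<exists>C \<in> bip_components n1 n2 E.
            real (card (part1 C)) \<le> L \<and> real (card (part2 C)) \<le> c * L \<and> is_complex E C}"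
    by (intro measure_pmf.finite_measure_mono) auto
  also have "\<dots> \<le> (L + 1) * (c * L + 1) * ((L + c * L) * (L * (c * L)) ^ 2 * p * exp (2 * p * L * (c * L)))"
    using \<open>L \<ge> 0\<close> c(2) by (intro prob_small_complex_component_le[OF p]) auto
  finally show ?thesis .
qed

definition small_complex_bound :: "real \<Rightarrow> real \<Rightarrow> real \<Rightarrow> real \<Rightarrow> real" where
  "small_complex_bound \<beta>0 c q x = (let L = \<beta>0 * ln x ^ 2; p = q / x in
     (L + 1) * (c * L + 1) * ((L + c * L) * (L * (c * L)) ^ 2 * p * exp (2 * p * L * (c * L))))"

lemma small_complex_bound_tendsto_0:
  assumes "0 < \<beta>0" "0 < c" "0 < q"
  shows "(small_complex_bound \<beta>0 c q \<longlongrightarrow> 0) at_top"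
  using assms unfolding small_complex_bound_def Let_def by real_asymp

lemma prob_small_balanced_complex_le_bound:
  assumes "0 < lam" "0 < d" "0 \<le> \<beta>0"
    and "real n1 = lam * real n2" "p = d / sqrt (real n1 * real n2)"
    and big: "max 1 (d * sqrt lam) \<le> real n1"
  shows "measure_pmf.prob (Gbip n1 n2 p) {E. \<exists>C \<in> bip_components n1 n2 E.
            is_small \<beta>0 n1 C \<and> is_balanced p n2 C \<and> is_complex E C}
     \<le> small_complex_bound \<beta>0 (2 * d / sqrt lam) (d * sqrt lam) (real n1)"
proof -
  have scaled: "p = d * sqrt lam / real n1" "2 * p * real n2 = 2 * d / sqrt lam"
    using edge_probability_scaling[OF assms(1,4,5)] big by auto
  then have "0 \<le> p" "p \<le> 1" using assms(1,2) big by auto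
  moreover have "0 \<le> 2 * d / sqrt lam" using assms(1,2) by simp
  ultimately show ?thesis
    unfolding small_complex_bound_def Let_def scaled(1)[symmetric]
    by (rule prob_small_balanced_complex_le[OF _ _ assms(3) scaled(2) _ refl])
qed

theorem lemma4p7:
  fixes lam d \<beta>0 :: real and n1 n2 :: "nat \<Rightarrow> nat" and p :: "nat \<Rightarrow> real"
  assumes "0 < lam" and "lam \<le> 1" and "d > 1"
    and "filterlim n1 at_top sequentially"
    and "\<And>k. real (n1 k) = lam * real (n2 k)"
    and "\<And>k. p k = d / sqrt (real (n1 k) * real (n2 k))"
    and "\<beta>0 > 0" and "johansson_gap \<beta>0 n1 n2 p"
  shows "whp (\<lambda>k. Gbip (n1 k) (n2 k) (p k)) (\<lambda>k E.
           \<not> (\<exists>C \<in> bip_components (n1 k) (n2 k) E.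
                 is_small \<beta>0 (n1 k) C \<and> is_balanced (p k) (n2 k) C \<and> is_complex E C))"
proof (rule whp_not_if_prob_tendsto_0)
  define c q where "c = 2 * d / sqrt lam" and "q = d * sqrt lam"
  have n1_lim: "filterlim (\<lambda>k. real (n1 k)) at_top sequentially"
    using filterlim_compose[OF filterlim_real_sequentially assms(4)] .
  have "(small_complex_bound \<beta>0 c q \<longlongrightarrow> 0) at_top"
    using assms(1,3,7) by (intro small_complex_bound_tendsto_0) (simp_all add: c_def q_def)
  then have lim: "(\<lambda>k. small_complex_bound \<beta>0 c q (real (n1 k))) \<longlonglongrightarrow> 0"
    using n1_lim by (rule filterlim_compose)
  have bounded: "eventually (\<lambda>k. measure_pmf.prob (Gbip (n1 k) (n2 k) (p k))
      {E. \<exists>C \<in> bip_components (n1 k) (n2 k) E.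
         is_small \<beta>0 (n1 k) C \<and> is_balanced (p k) (n2 k) C \<and> is_complex E C}
      \<le> small_complex_bound \<beta>0 c q (real (n1 k))) sequentially"
    using n1_lim[unfolded filterlim_at_top, rule_format, of "max 1 q"]
    by (rule eventually_mono) (use assms(1,3,7) in
        \<open>auto simp: c_def q_def intro!: prob_small_balanced_complex_le_bound assms(5,6)\<close>)
  show "(\<lambda>k. measure_pmf.prob (Gbip (n1 k) (n2 k) (p k))
      {E. \<exists>C \<in> bip_components (n1 k) (n2 k) E.
         is_small \<beta>0 (n1 k) C \<and> is_balanced (p k) (n2 k) C \<and> is_complex E C}) \<longlonglongrightarrow> 0"
    by (rule tendsto_sandwich[OF _ bounded tendsto_const lim]) simp
qed

end
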